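(* Let $n\ge 2$, $N=2n^2$, and let $\hat{\mathbf A}$, $\hat{\mathbf D}$ and $\mathbf Q=\begin{pmatrix}\hat{\mathbf A} & \mathbf 0\\ \mathbf I_N-\hat{\mathbf A} & \hat{\mathbf D}\end{pmatrix}$ be as in the context. For an $N\times N$ matrix $\mathbf T$ and $\epsilon>0$ put $$\mathbf G=\begin{pmatrix}\mathbf 0_{N\times N} & \mathbf T\\ \mathbf 0_{N\times N} & -\mathbf T\end{pmatrix},\qquad \mathbf Q_{\epsilon,\mathbf T}=\mathbf Q+\epsilon\mathbf G .$$ If $\mathbf T=\mathbf I_N-\hat{\mathbf D}$ (or $\mathbf T=\mathbf I_N-\hat{\mathbf D}^{-1}$), then $\mathbf Q_{\epsilon,\mathbf T}$ has exactly three linearly independent right eigenvectors for the eigenvalue $1$, and these are exactly the right eigenvectors of $\mathbf Q$ for the eigenvalue $1$, namely $\begin{pmatrix}\mathbf 1_N\\ \mathbf 0_N\end{pmatrix}$, $\begin{pmatrix}\mathbf 0_N\\ \bar{\mathbf v}^+\end{pmatrix}$, $\begin{pmatrix}\mathbf 0_N\\ \bar{\mathbf v}^-\end{pmatrix}$, where $\bar{\mathbf v}^\pm$ span the eigenspace of $\hat{\mathbf D}$ for the eigenvalue $1$.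
   Context: Notation: $n\ge2$, $N=2n^2$. $\hat{\mathbf A}$ is an $N\times N$ row-stochastic SIA matrix (so $1$ is a simple eigenvalue and all others have modulus $<1$). For $l=1,\dots,n$, $\mathbf D^l$ is an $n\times n$ column-stochastic matrix, and $\hat{\mathbf D}$ is the $N\times N$ matrix partitioned into an $n\times n$ array of $2n\times 2n$ blocks whose $(i,l)$ block equals $\frac1n\,\mathrm{diag}(\mathbf D^l,\mathbf D^l)$ for all $i,l$; it is assumed that $\frac1n\sum_l\mathbf D^l$ has $1$ as a simple eigenvalue, so that the eigenvalue $1$ of $\hat{\mathbf D}$ has a two-dimensional eigenspace spanned by two nonnegative vectors $\bar{\mathbf v}^+$ (supported on the coordinates $j$ with $1\le j \bmod 2n\le n$) and $\bar{\mathbf v}^-$ (supported on the coordinates $j$ with $n+1\le j\bmod 2n\le 2n$, where residue $0$ is read as $2n$). $\mathbf 1_N,\mathbf 0_N$ are the all-ones and zero vectors. *)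

theory Defs
  imports "Jordan_Normal_Form.Matrix" "Jordan_Normal_Form.Char_Poly"
begin

definition row_stochastic :: "nat \<Rightarrow> real mat \<Rightarrow> bool" where
  "row_stochastic m A \<longleftrightarrow> A \<in> carrier_mat m m \<and>
     (\<forall>i<m. \<forall>j<m. A $$ (i,j) \<ge> 0) \<and> (\<forall>i<m. (\<Sum>j<m. A $$ (i,j)) = 1)"

definition col_stochastic :: "nat \<Rightarrow> real mat \<Rightarrow> bool" where
  "col_stochastic m A \<longleftrightarrow> A \<in> carrier_mat m m \<and>
     (\<forall>i<m. \<forall>j<m. A $$ (i,j) \<ge> 0) \<and> (\<forall>j<m. (\<Sum>i<m. A $$ (i,j)) = 1)"

text \<open>SIA (stochastic, indecomposable, aperiodic): row-stochastic and the powers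
  converge to a matrix all of whose rows are equal (i.e. to 1 c^T).\<close>
definition SIA :: "nat \<Rightarrow> real mat \<Rightarrow> bool" where
  "SIA m A \<longleftrightarrow> row_stochastic m A \<and>
     (\<exists>c :: nat \<Rightarrow> real. \<forall>i<m. \<forall>j<m. (\<lambda>k. (A ^\<^sub>m k) $$ (i,j)) \<longlonglongrightarrow> c j)"

text \<open>The N x N matrix D-hat (N = 2n^2): n x n array of 2n x 2n blocks, block (i,l)
  equal to (1/n) diag(D^l, D^l); here l ranges over 0..n-1.\<close>
definition Dhat :: "nat \<Rightarrow> (nat \<Rightarrow> real mat) \<Rightarrow> real mat" where
  "Dhat n Dl = mat (2*n^2) (2*n^2) (\<lambda>(i,j).
     (let l = j div (2*n); r = i mod (2*n); s = j mod (2*n) in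
       if r < n \<and> s < n then Dl l $$ (r, s) / real n
       else if n \<le> r \<and> n \<le> s then Dl l $$ (r - n, s - n) / real n
       else 0))"

definition Dmean :: "nat \<Rightarrow> (nat \<Rightarrow> real mat) \<Rightarrow> real mat" where
  "Dmean n Dl = mat n n (\<lambda>(r,s). (\<Sum>l<n. Dl l $$ (r,s)) / real n)"

definition Qmat :: "nat \<Rightarrow> real mat \<Rightarrow> real mat \<Rightarrow> real mat" where
  "Qmat N A D = four_block_mat A (0\<^sub>m N N) (1\<^sub>m N - A) D"

definition Gmat :: "nat \<Rightarrow> real mat \<Rightarrow> real mat" where
  "Gmat N T = four_block_mat (0\<^sub>m N N) T (0\<^sub>m N N) (- T)"

definition Qeps :: "nat \<Rightarrow> real mat \<Rightarrow> real mat \<Rightarrow> real \<Rightarrow> real mat \<Rightarrow> real mat" where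
  "Qeps N A D \<epsilon> T = Qmat N A D + \<epsilon> \<cdot>\<^sub>m Gmat N T"

definition eig1 :: "nat \<Rightarrow> real mat \<Rightarrow> real vec set" where
  "eig1 m M = {z \<in> carrier_vec m. M *\<^sub>v z = z}"

definition ones_vec :: "nat \<Rightarrow> real vec" where
  "ones_vec m = vec m (\<lambda>_. 1)"

end

theory Submission
  imports Defs
begin

text \<open>On a vector split as x @ y, the fixed-point equation of Q decouples into A x = x and
  D y = y, since the lower-left block I - A only feeds back x - A x = 0. The perturbation
  G acts through T y alone, and the sum of the two block equations of Q + \<epsilon> G again
  gives D y = y; as T annihilates the fixed vectors of D (for T = I - D^{-1} because
  D^{-1} fixes them as well), the perturbation drops out. The fixed vectors of the SIA
  matrix A are constant (pass to the limit in A^k x = x), and the fixed vectors of D are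
  spanned by v+ and v-, which are independent because their supports are disjoint.\<close>

lemma smult_mat_mult_vec:
  "dim_vec v = dim_col M \<Longrightarrow> (e \<cdot>\<^sub>m (M :: 'a :: comm_ring mat)) *\<^sub>v v = e \<cdot>\<^sub>v (M *\<^sub>v v)"
  by (intro eq_vecI) (auto simp: scalar_prod_def sum_distrib_left ac_simps)

lemma zero_mat_mult_vec [simp]:
  "dim_vec v = nc \<Longrightarrow> (0\<^sub>m nr nc :: 'a :: semiring_0 mat) *\<^sub>v v = 0\<^sub>v nr"
  by (intro eq_vecI) (auto simp: scalar_prod_def)

lemma one_minus_mat_mult_eig1:
  assumes "M \<in> carrier_mat n n" and "y \<in> eig1 n M"
  shows "(1\<^sub>m n - M) *\<^sub>v y = 0\<^sub>v n"
  using assms unfolding eig1_def by (subst minus_mult_distrib_mat_vec[of _ n n]) auto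

lemma eig1_subset_eig1_left_inverse:
  assumes M: "M \<in> carrier_mat n n" and Minv: "Minv \<in> carrier_mat n n"
    and inv: "Minv * M = 1\<^sub>m n"
  shows "eig1 n M \<subseteq> eig1 n Minv"
proof
  fix y assume "y \<in> eig1 n M"
  then have y: "y \<in> carrier_vec n" and My: "M *\<^sub>v y = y" unfolding eig1_def by auto
  have "Minv *\<^sub>v y = (Minv * M) *\<^sub>v y" using assoc_mult_mat_vec[OF Minv M y] My by simp
  also have "\<dots> = y" using inv y by simp
  finally show "y \<in> eig1 n Minv" using y unfolding eig1_def by simp
qed

lemma eig1_append_split:
  assumes "\<And>x y. x \<in> carrier_vec m \<Longrightarrow> y \<in> carrier_vec k \<Longrightarrow>
      M *\<^sub>v (x @\<^sub>v y) = x @\<^sub>v y \<longleftrightarrow> x \<in> eig1 m B \<and> y \<in> eig1 k C"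
  shows "eig1 (m + k) M = {x @\<^sub>v y | x y. x \<in> eig1 m B \<and> y \<in> eig1 k C}"
proof (intro equalityI subsetI)
  fix z assume z: "z \<in> eig1 (m + k) M"
  then have split: "z = vec_first z m @\<^sub>v vec_last z k" unfolding eig1_def by simp
  with z assms[of "vec_first z m" "vec_last z k"]
  show "z \<in> {x @\<^sub>v y | x y. x \<in> eig1 m B \<and> y \<in> eig1 k C}"
    unfolding eig1_def by (metis (mono_tags, lifting) mem_Collect_eq vec_first_carrier vec_last_carrier)
next
  fix z assume "z \<in> {x @\<^sub>v y | x y. x \<in> eig1 m B \<and> y \<in> eig1 k C}"
  then show "z \<in> eig1 (m + k) M" using assms unfolding eig1_def by auto
qed

lemma Qmat_mult_append:
  assumes A: "A \<in> carrier_mat N N" and D: "D \<in> carrier_mat N N"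
    and x: "x \<in> carrier_vec N" and y: "y \<in> carrier_vec N"
  shows "Qmat N A D *\<^sub>v (x @\<^sub>v y) = (A *\<^sub>v x) @\<^sub>v (x - A *\<^sub>v x + D *\<^sub>v y)"
proof -
  have "Qmat N A D *\<^sub>v (x @\<^sub>v y) = (A *\<^sub>v x + 0\<^sub>m N N *\<^sub>v y) @\<^sub>v ((1\<^sub>m N - A) *\<^sub>v x + D *\<^sub>v y)"
    unfolding Qmat_def by (rule four_block_mat_mult_vec[OF A _ _ D x y]) (use A in auto)
  also have "(1\<^sub>m N - A) *\<^sub>v x = x - A *\<^sub>v x"
    using A x by (subst minus_mult_distrib_mat_vec[of _ N N]) auto
  finally show ?thesis using A x y by simp
qed

lemma Qeps_mult_append:
  assumes A: "A \<in> carrier_mat N N" and D: "D \<in> carrier_mat N N" and T: "T \<in> carrier_mat N N"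
    and x: "x \<in> carrier_vec N" and y: "y \<in> carrier_vec N"
  shows "Qeps N A D e T *\<^sub>v (x @\<^sub>v y) =
    (A *\<^sub>v x + e \<cdot>\<^sub>v (T *\<^sub>v y)) @\<^sub>v (x - A *\<^sub>v x + D *\<^sub>v y - e \<cdot>\<^sub>v (T *\<^sub>v y))"
proof -
  have G: "Gmat N T *\<^sub>v (x @\<^sub>v y) = (0\<^sub>m N N *\<^sub>v x + T *\<^sub>v y) @\<^sub>v (0\<^sub>m N N *\<^sub>v x + (- T) *\<^sub>v y)"
    unfolding Gmat_def by (rule four_block_mat_mult_vec[OF _ T _ _ x y]) (use T in auto)
  have Q: "Qmat N A D \<in> carrier_mat (N + N) (N + N)" unfolding Qmat_def using A D by auto
  have "Gmat N T \<in> carrier_mat (N + N) (N + N)" unfolding Gmat_def using T by auto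
  then have "Qeps N A D e T *\<^sub>v (x @\<^sub>v y) = Qmat N A D *\<^sub>v (x @\<^sub>v y) + e \<cdot>\<^sub>v (Gmat N T *\<^sub>v (x @\<^sub>v y))"
    unfolding Qeps_def using Q x y
    by (subst add_mult_distrib_mat_vec[of _ "N + N" "N + N"]) (auto simp: smult_mat_mult_vec)
  also have "\<dots> = (A *\<^sub>v x + e \<cdot>\<^sub>v (T *\<^sub>v y)) @\<^sub>v (x - A *\<^sub>v x + D *\<^sub>v y - e \<cdot>\<^sub>v (T *\<^sub>v y))"
    unfolding Qmat_mult_append[OF A D x y] G
    by (rule eq_vecI) (use A D T x y in auto)
  finally show ?thesis .
qed

lemma eig1_Qmat:
  assumes A: "A \<in> carrier_mat N N" and D: "D \<in> carrier_mat N N"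
  shows "eig1 (N + N) (Qmat N A D) = {x @\<^sub>v y | x y. x \<in> eig1 N A \<and> y \<in> eig1 N D}"
proof (rule eig1_append_split)
  fix x y :: "real vec" assume x: "x \<in> carrier_vec N" and y: "y \<in> carrier_vec N"
  have "Qmat N A D *\<^sub>v (x @\<^sub>v y) = x @\<^sub>v y \<longleftrightarrow> A *\<^sub>v x = x \<and> x - A *\<^sub>v x + D *\<^sub>v y = y"
    unfolding Qmat_mult_append[OF A D x y] by (rule append_vec_eq) (use A x in auto)
  also have "\<dots> \<longleftrightarrow> A *\<^sub>v x = x \<and> D *\<^sub>v y = y"
    using A D x y by (auto simp: vec_eq_iff)
  finally show "Qmat N A D *\<^sub>v (x @\<^sub>v y) = x @\<^sub>v y \<longleftrightarrow> x \<in> eig1 N A \<and> y \<in> eig1 N D"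
    using x y unfolding eig1_def by simp
qed

lemma eig1_Qeps:
  assumes A: "A \<in> carrier_mat N N" and D: "D \<in> carrier_mat N N" and T: "T \<in> carrier_mat N N"
    and T_kills: "\<And>y. y \<in> eig1 N D \<Longrightarrow> T *\<^sub>v y = 0\<^sub>v N"
  shows "eig1 (N + N) (Qeps N A D e T) = {x @\<^sub>v y | x y. x \<in> eig1 N A \<and> y \<in> eig1 N D}"
proof (rule eig1_append_split)
  fix x y :: "real vec" assume x: "x \<in> carrier_vec N" and y: "y \<in> carrier_vec N"
  let ?eTy = "e \<cdot>\<^sub>v (T *\<^sub>v y)"
  have "Qeps N A D e T *\<^sub>v (x @\<^sub>v y) = x @\<^sub>v y \<longleftrightarrow>
      A *\<^sub>v x + ?eTy = x \<and> x - A *\<^sub>v x + D *\<^sub>v y - ?eTy = y"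
    unfolding Qeps_mult_append[OF A D T x y] by (rule append_vec_eq) (use A T x y in auto)
  also have "\<dots> \<longleftrightarrow> A *\<^sub>v x = x \<and> D *\<^sub>v y = y"
  proof
    assume fixed: "A *\<^sub>v x + ?eTy = x \<and> x - A *\<^sub>v x + D *\<^sub>v y - ?eTy = y"
    have Dy: "D *\<^sub>v y = y"
    proof (rule eq_vecI)
      fix i assume "i < dim_vec y"
      with fixed A D T x y show "(D *\<^sub>v y) $ i = y $ i"
        by (auto dest!: arg_cong[where f = "\<lambda>v. v $ i"])
    qed (use D y in auto)
    then have "T *\<^sub>v y = 0\<^sub>v N" using T_kills y unfolding eig1_def by simp
    with fixed Dy A x show "A *\<^sub>v x = x \<and> D *\<^sub>v y = y" by (auto simp: vec_eq_iff)
  next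
    assume fixed: "A *\<^sub>v x = x \<and> D *\<^sub>v y = y"
    then have "T *\<^sub>v y = 0\<^sub>v N" using T_kills y unfolding eig1_def by simp
    with fixed x y show "A *\<^sub>v x + ?eTy = x \<and> x - A *\<^sub>v x + D *\<^sub>v y - ?eTy = y" by auto
  qed
  finally show "Qeps N A D e T *\<^sub>v (x @\<^sub>v y) = x @\<^sub>v y \<longleftrightarrow> x \<in> eig1 N A \<and> y \<in> eig1 N D"
    using x y unfolding eig1_def by simp
qed

lemma mat_pow_mult_fixed_vec:
  assumes A: "A \<in> carrier_mat m m" and x: "x \<in> carrier_vec m" and Ax: "A *\<^sub>v x = x"
  shows "(A ^\<^sub>m k) *\<^sub>v x = x"
proof (induction k)
  case (Suc k)
  have "(A ^\<^sub>m Suc k) *\<^sub>v x = (A ^\<^sub>m k) *\<^sub>v (A *\<^sub>v x)"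
    using assoc_mult_mat_vec[OF pow_carrier_mat[OF A] A x] by simp
  then show ?case using Suc Ax by simp
qed (use A x in simp)

lemma SIA_fixed_vec_const:
  assumes S: "SIA m A" and x: "x \<in> carrier_vec m" and Ax: "A *\<^sub>v x = x"
  shows "\<exists>a. x = a \<cdot>\<^sub>v ones_vec m"
proof -
  from S have A: "A \<in> carrier_mat m m" unfolding SIA_def row_stochastic_def by auto
  from S obtain c where c: "\<forall>i<m. \<forall>j<m. (\<lambda>k. (A ^\<^sub>m k) $$ (i,j)) \<longlonglongrightarrow> c j"
    unfolding SIA_def by auto
  have "x $ i = (\<Sum>j<m. c j * x $ j)" if i: "i < m" for i
  proof -
    have "(A ^\<^sub>m k *\<^sub>v x) $ i = (\<Sum>j<m. (A ^\<^sub>m k) $$ (i,j) * x $ j)" for k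
      using A x i by (simp add: scalar_prod_def row_def lessThan_atLeast0)
    then have "(\<lambda>k. x $ i) = (\<lambda>k. \<Sum>j<m. (A ^\<^sub>m k) $$ (i,j) * x $ j)"
      using mat_pow_mult_fixed_vec[OF A x Ax] by simp
    also have "\<dots> \<longlonglongrightarrow> (\<Sum>j<m. c j * x $ j)"
      by (intro tendsto_sum tendsto_mult_right) (use c i in auto)
    finally show ?thesis using LIMSEQ_const_iff by blast
  qed
  with x show ?thesis by (auto simp: vec_eq_iff ones_vec_def)
qed

lemma row_stochastic_mult_ones_vec:
  assumes "row_stochastic m A" shows "A *\<^sub>v ones_vec m = ones_vec m"
  using assms unfolding row_stochastic_def ones_vec_def
  by (auto simp: vec_eq_iff scalar_prod_def row_def lessThan_atLeast0)

lemma eig1_SIA: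
  assumes S: "SIA m A"
  shows "eig1 m A = {a \<cdot>\<^sub>v ones_vec m | a. True}"
proof (intro equalityI subsetI)
  fix x assume "x \<in> eig1 m A"
  then show "x \<in> {a \<cdot>\<^sub>v ones_vec m | a. True}"
    using SIA_fixed_vec_const[OF S] unfolding eig1_def by auto
next
  fix x assume "x \<in> {a \<cdot>\<^sub>v ones_vec m | a. True}"
  then obtain a where x: "x = a \<cdot>\<^sub>v ones_vec m" by blast
  from S have "A \<in> carrier_mat m m" and "A *\<^sub>v ones_vec m = ones_vec m"
    unfolding SIA_def using row_stochastic_mult_ones_vec by (auto simp: row_stochastic_def)
  then show "x \<in> eig1 m A"
    unfolding x eig1_def by (auto simp: mult_mat_vec ones_vec_def)
qed

lemma lin_indep_of_disjoint_support:
  fixes v w :: "'a :: field vec"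
  assumes v: "v \<in> carrier_vec m" "v \<noteq> 0\<^sub>v m" and w: "w \<in> carrier_vec m" "w \<noteq> 0\<^sub>v m"
    and disjoint: "\<forall>j<m. v $ j = 0 \<or> w $ j = 0"
    and comb: "b \<cdot>\<^sub>v v + c \<cdot>\<^sub>v w = 0\<^sub>v m"
  shows "b = 0 \<and> c = 0"
proof -
  have comb_j: "b * v $ j + c * w $ j = 0" if "j < m" for j
    using arg_cong[OF comb, of "\<lambda>u. u $ j"] that v w by simp
  obtain j where "j < m" "v $ j \<noteq> 0" using v by (auto simp: vec_eq_iff)
  with comb_j disjoint have "b = 0" by fastforce
  moreover obtain k where "k < m" "w $ k \<noteq> 0" using w by (auto simp: vec_eq_iff)
  with comb_j disjoint have "c = 0" by fastforce
  ultimately show ?thesis ..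
qed

lemma append_vec_lincomb:
  fixes u v w :: "'a :: comm_ring vec"
  assumes "u \<in> carrier_vec m" "v \<in> carrier_vec k" "w \<in> carrier_vec k"
  shows "a \<cdot>\<^sub>v (u @\<^sub>v 0\<^sub>v k) + b \<cdot>\<^sub>v (0\<^sub>v m @\<^sub>v v) + c \<cdot>\<^sub>v (0\<^sub>v m @\<^sub>v w)
    = (a \<cdot>\<^sub>v u) @\<^sub>v (b \<cdot>\<^sub>v v + c \<cdot>\<^sub>v w)"
  using assms by (auto simp: vec_eq_iff)

lemma ones_append_disjoint_support_lin_indep:
  assumes m: "0 < m"
    and v: "v \<in> carrier_vec k" "v \<noteq> 0\<^sub>v k" and w: "w \<in> carrier_vec k" "w \<noteq> 0\<^sub>v k"
    and disjoint: "\<forall>j<k. v $ j = 0 \<or> w $ j = 0"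
    and comb: "a \<cdot>\<^sub>v (ones_vec m @\<^sub>v 0\<^sub>v k) + b \<cdot>\<^sub>v (0\<^sub>v m @\<^sub>v v) + c \<cdot>\<^sub>v (0\<^sub>v m @\<^sub>v w) = 0\<^sub>v (m + k)"
  shows "a = 0 \<and> b = 0 \<and> c = 0"
proof -
  have ones: "ones_vec m \<in> carrier_vec m" unfolding ones_vec_def by simp
  have "0\<^sub>v m @\<^sub>v 0\<^sub>v k = (0\<^sub>v (m + k) :: real vec)" by auto
  with comb have "(a \<cdot>\<^sub>v ones_vec m) @\<^sub>v (b \<cdot>\<^sub>v v + c \<cdot>\<^sub>v w) = 0\<^sub>v m @\<^sub>v 0\<^sub>v k"
    using append_vec_lincomb[OF ones v(1) w(1)] by simp
  then have a_ones: "a \<cdot>\<^sub>v ones_vec m = 0\<^sub>v m" and bc: "b \<cdot>\<^sub>v v + c \<cdot>\<^sub>v w = 0\<^sub>v k"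
    using ones by (simp_all add: append_vec_eq)
  from m have "a = (a \<cdot>\<^sub>v ones_vec m) $ 0" by (simp add: ones_vec_def)
  also have "\<dots> = 0" using a_ones m by simp
  finally show ?thesis using lin_indep_of_disjoint_support[OF v w disjoint bc] by blast
qed

theorem lemma2:
  fixes n :: nat and A T :: "real mat" and Dl :: "nat \<Rightarrow> real mat"
    and vp vm :: "real vec" and \<epsilon> :: real
  defines "N \<equiv> 2 * n^2"
  assumes n2: "n \<ge> 2"
    and A_SIA: "SIA N A"
    and Dl_stoch: "\<forall>l<n. col_stochastic n (Dl l)"
    and simple: "order 1 (char_poly (Dmean n Dl)) = 1"
    and vp: "vp \<in> carrier_vec N" "vp \<noteq> 0\<^sub>v N" "\<forall>j<N. vp $ j \<ge> 0"
            "\<forall>j<N. \<not> (j mod (2*n) < n) \<longrightarrow> vp $ j = 0"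
    and vm: "vm \<in> carrier_vec N" "vm \<noteq> 0\<^sub>v N" "\<forall>j<N. vm $ j \<ge> 0"
            "\<forall>j<N. j mod (2*n) < n \<longrightarrow> vm $ j = 0"
    and span_D: "eig1 N (Dhat n Dl) = {a \<cdot>\<^sub>v vp + b \<cdot>\<^sub>v vm | a b. True}"
    and eps: "\<epsilon> > 0"
    and T: "T = 1\<^sub>m N - Dhat n Dl \<or>
            (\<exists>Dinv \<in> carrier_mat N N. Dhat n Dl * Dinv = 1\<^sub>m N \<and> Dinv * Dhat n Dl = 1\<^sub>m N
                \<and> T = 1\<^sub>m N - Dinv)"
  shows "eig1 (2*N) (Qeps N A (Dhat n Dl) \<epsilon> T) = eig1 (2*N) (Qmat N A (Dhat n Dl))
       \<and> eig1 (2*N) (Qmat N A (Dhat n Dl)) =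
           {a \<cdot>\<^sub>v (ones_vec N @\<^sub>v 0\<^sub>v N) + b \<cdot>\<^sub>v (0\<^sub>v N @\<^sub>v vp) + c \<cdot>\<^sub>v (0\<^sub>v N @\<^sub>v vm) | a b c. True}
       \<and> (\<forall>a b c. a \<cdot>\<^sub>v (ones_vec N @\<^sub>v 0\<^sub>v N) + b \<cdot>\<^sub>v (0\<^sub>v N @\<^sub>v vp) + c \<cdot>\<^sub>v (0\<^sub>v N @\<^sub>v vm)
                  = 0\<^sub>v (2*N) \<longrightarrow> a = 0 \<and> b = 0 \<and> c = 0)"
proof -
  let ?D = "Dhat n Dl"
  let ?span = "{a \<cdot>\<^sub>v (ones_vec N @\<^sub>v 0\<^sub>v N) + b \<cdot>\<^sub>v (0\<^sub>v N @\<^sub>v vp) + c \<cdot>\<^sub>v (0\<^sub>v N @\<^sub>v vm) | a b c. True}"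
  have D: "?D \<in> carrier_mat N N" unfolding Dhat_def N_def by auto
  have A: "A \<in> carrier_mat N N" using A_SIA unfolding SIA_def row_stochastic_def by auto
  have T_kills: "T *\<^sub>v y = 0\<^sub>v N" if "y \<in> eig1 N ?D" for y
    using T
  proof
    assume "T = 1\<^sub>m N - ?D"
    with that D show ?thesis by (simp add: one_minus_mat_mult_eig1)
  next
    assume "\<exists>Dinv \<in> carrier_mat N N. ?D * Dinv = 1\<^sub>m N \<and> Dinv * ?D = 1\<^sub>m N \<and> T = 1\<^sub>m N - Dinv"
    with that show ?thesis
      using eig1_subset_eig1_left_inverse[OF D] one_minus_mat_mult_eig1 by blast
  qed
  have T_carrier: "T \<in> carrier_mat N N" using T D by auto
  have ones: "ones_vec N \<in> carrier_vec N" unfolding ones_vec_def by simp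
  have "eig1 (2*N) (Qmat N A ?D) = ?span"
    unfolding mult_2 eig1_Qmat[OF A D] eig1_SIA[OF A_SIA] span_D
      append_vec_lincomb[OF ones vp(1) vm(1)] by blast
  moreover have "eig1 (2*N) (Qeps N A ?D \<epsilon> T) = eig1 (2*N) (Qmat N A ?D)"
    using eig1_Qeps[OF A D T_carrier T_kills] eig1_Qmat[OF A D] by (simp add: mult_2)
  moreover have "a = 0 \<and> b = 0 \<and> c = 0"
    if "a \<cdot>\<^sub>v (ones_vec N @\<^sub>v 0\<^sub>v N) + b \<cdot>\<^sub>v (0\<^sub>v N @\<^sub>v vp) + c \<cdot>\<^sub>v (0\<^sub>v N @\<^sub>v vm) = 0\<^sub>v (2*N)"
    for a b c
  proof (rule ones_append_disjoint_support_lin_indep[OF _ vp(1,2) vm(1,2) _ that[unfolded mult_2]])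
    show "0 < N" unfolding N_def using n2 by simp
    show "\<forall>j<N. vp $ j = 0 \<or> vm $ j = 0" using vp(4) vm(4) by blast
  qed
  ultimately show ?thesis by blast
qed

end
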